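(* Let $\kappa=(\xi,\eta)\in S\mathbb{H}$. Then the tangent space to $S\mathbb{H}$ at $\kappa$ is $$T_\kappa S\mathbb{H}=\{(\alpha,\beta)\in\mathbb{H}^2:\alpha\bar\eta+\xi\bar\beta\in\mathcal{V}\},$$ and it decomposes into orthogonal real subspaces as $$T_\kappa S\mathbb{H}=\kappa\mathbb{H}\oplus\check\kappa\mathcal{V}=\kappa\mathbb{R}\oplus\kappa\mathbb{I}\oplus\check\kappa\mathcal{V}.$$
   Context: For $q=a+bi+cj+dk\in\mathbb{H}$, $q'=a-bi-cj+dk$, $\bar q=a-bi-cj-dk$. $\mathbb{I}=\mathrm{span}_\mathbb{R}\{i,j,k\}$, $\mathcal{V}=\mathrm{span}_\mathbb{R}\{1,i,j\}$. $S\mathbb{H}=\{(\xi,\eta)\in\mathbb{H}^2\setminus\{(0,0)\}:\xi\bar\eta\in\mathcal{V}\}$, a smooth submanifold of $\mathbb{H}^2$. For $\kappa=(\xi,\eta)$, $\check\kappa=(\eta',-\xi')$, and $\kappa X=\{(\xi x,\eta x):x\in X\}$. Orthogonality is with respect to the real inner product $\langle\kappa_1,\kappa_2\rangle=\mathrm{Re}(\xi_1\bar\xi_2+\eta_1\bar\eta_2)$ on $\mathbb{H}^2$. *)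

theory Defs
  imports "HOL-Analysis.Analysis"
begin

text \<open>Quaternions q = a + b i + c j + d k are represented as tuples (a,b,c,d) of reals.
  The product type carries the Euclidean inner product, which on quaternions is Re(q1 * conj q2);
  on pairs of quaternions (the type quat \<times> quat) it is Re(xi1 conj xi2 + eta1 conj eta2).\<close>

type_synonym quat = "real \<times> real \<times> real \<times> real"

definition qmult :: "quat \<Rightarrow> quat \<Rightarrow> quat" (infixl "\<star>" 70) where
  "qmult p q = (case p of (a1,b1,c1,d1) \<Rightarrow> case q of (a2,b2,c2,d2) \<Rightarrow>
     (a1*a2 - b1*b2 - c1*c2 - d1*d2,
      a1*b2 + b1*a2 + c1*d2 - d1*c2,
      a1*c2 - b1*d2 + c1*a2 + d1*b2,
      a1*d2 + b1*c2 - c1*b2 + d1*a2))"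

definition qcnj :: "quat \<Rightarrow> quat" where
  "qcnj q = (case q of (a,b,c,d) \<Rightarrow> (a,-b,-c,-d))"

definition qprime :: "quat \<Rightarrow> quat" where
  "qprime q = (case q of (a,b,c,d) \<Rightarrow> (a,-b,-c,d))"

definition qReals :: "quat set" where "qReals = {(a,0,0,0) | a. True}"
definition qImag :: "quat set" where "qImag = {(0,b,c,d) | b c d. True}"
definition qV :: "quat set" where "qV = {(a,b,c,0) | a b c. True}"

definition SH :: "(quat \<times> quat) set" where
  "SH = {(\<xi>,\<eta>). (\<xi>,\<eta>) \<noteq> (0,0) \<and> \<xi> \<star> qcnj \<eta> \<in> qV}"

definition rmul_set :: "quat \<times> quat \<Rightarrow> quat set \<Rightarrow> (quat \<times> quat) set" where
  "rmul_set \<kappa> X = {(fst \<kappa> \<star> x, snd \<kappa> \<star> x) | x. x \<in> X}"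

definition kcheck :: "quat \<times> quat \<Rightarrow> quat \<times> quat" where
  "kcheck \<kappa> = (qprime (snd \<kappa>), - qprime (fst \<kappa>))"

definition tangent_space :: "'a::real_normed_vector set \<Rightarrow> 'a \<Rightarrow> 'a set" where
  "tangent_space S p = {v. \<exists>\<gamma> e. e > 0 \<and> \<gamma> 0 = p \<and> (\<forall>t. \<bar>t\<bar> < e \<longrightarrow> \<gamma> t \<in> S)
      \<and> (\<gamma> has_vector_derivative v) (at (0::real))}"

end

theory Submission
  imports Defs
begin

text \<open>SH is the zero set, minus the origin, of the real quadratic form
  F(\<xi>, \<eta>) = k-part of \<xi> conj(\<eta>), whose differential at \<kappa> = (\<xi>, \<eta>) sends (\<alpha>, \<beta>) to the
  k-part of \<alpha> conj(\<eta>) + \<xi> conj(\<beta>); so tangent vectors lie in this kernel. Conversely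
  F(\<kappa> x) = |x|^2 F(\<kappa>), and F(\<kappa> + kcheck \<kappa> w) = (1 + |w|^2) F(\<kappa>) for w in V, so the curve
  t \<mapsto> (\<kappa> + t kcheck \<kappa> w)(1 + t h) stays in SH and has velocity \<kappa> h + kcheck \<kappa> w at t = 0.
  Finally, when F(\<kappa>) = 0 the pair \<kappa>, kcheck \<kappa> is an orthogonal quaternionic frame of \<bbbH>^2:
  |\<kappa>|^2 v = \<kappa> (\<kappa>^* v) + kcheck \<kappa> ((kcheck \<kappa>)^* v) for every v, where \<kappa>^* is the adjoint of x \<mapsto> \<kappa> x,
  and the k-part of (kcheck \<kappa>)^* v is the differential of F at \<kappa> applied to v. Hence the kernel
  is \<kappa>\<bbbH> + kcheck \<kappa> V.\<close>

lemma derivative_vanishes_on_tangent_space: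
  fixes f :: "'a::real_normed_vector \<Rightarrow> 'b::real_normed_vector"
  assumes v: "v \<in> tangent_space S p"
    and f_S: "\<And>x. x \<in> S \<Longrightarrow> f x = 0" and f': "(f has_derivative f') (at p)"
  shows "f' v = 0"
proof -
  obtain \<gamma> e where e: "e > 0" and \<gamma>0: "\<gamma> 0 = p" and \<gamma>_S: "\<And>t. \<bar>t\<bar> < e \<Longrightarrow> \<gamma> t \<in> S"
    and \<gamma>': "(\<gamma> has_derivative (\<lambda>s. s *\<^sub>R v)) (at 0)"
    using v by (auto simp: tangent_space_def has_vector_derivative_def)
  have "(f \<circ> \<gamma> has_derivative (\<lambda>s. f' (s *\<^sub>R v))) (at 0)"
    using diff_chain_at[OF \<gamma>'] f' \<gamma>0 by (simp add: o_def)
  then have "((\<lambda>t. 0) has_derivative (\<lambda>s. f' (s *\<^sub>R v))) (at 0)"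
    by (rule has_derivative_transform_within_open[of _ _ _ _ "ball 0 e"])
       (use e \<gamma>_S f_S in auto)
  then have "(\<lambda>s. f' (s *\<^sub>R v)) = (\<lambda>s. 0)"
    by (rule Deriv.has_derivative_zero_unique)
  then show ?thesis
    by (metis scaleR_one)
qed

lemma tangent_spaceI:
  fixes \<gamma> :: "real \<Rightarrow> 'a::real_normed_vector"
  assumes "(\<gamma> has_vector_derivative v) (at 0)" and "\<gamma> 0 = p" and "p \<in> S"
    and "eventually (\<lambda>t. \<gamma> t \<in> S) (at 0)"
  shows "v \<in> tangent_space S p"
proof -
  obtain e where "e > 0" and "\<And>t. t \<noteq> 0 \<Longrightarrow> \<bar>t\<bar> < e \<Longrightarrow> \<gamma> t \<in> S"
    using assms(4) by (auto simp: eventually_at dist_real_def)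
  then have "\<forall>t. \<bar>t\<bar> < e \<longrightarrow> \<gamma> t \<in> S"
    using assms(2,3) by metis
  then show ?thesis
    using assms(1,2) \<open>e > 0\<close> unfolding tangent_space_def by blast
qed

lemma quat_pair_cases:
  obtains x1 x2 x3 x4 y1 y2 y3 y4 where "\<kappa> = ((x1, x2, x3, x4), (y1, y2, y3, y4))"
  by (cases \<kappa>) (metis prod_cases4)

definition kpart :: "quat \<Rightarrow> real" where
  "kpart q = snd (snd (snd q))"

lemma qV_iff_kpart: "q \<in> qV \<longleftrightarrow> kpart q = 0"
  by (cases q rule: prod_cases4) (auto simp: qV_def kpart_def)

lemma kpart_add: "kpart (x + y) = kpart x + kpart y"
  by (simp add: kpart_def)

lemma qV_scaleR: "w \<in> qV \<Longrightarrow> c *\<^sub>R w \<in> qV"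
  by (simp add: qV_iff_kpart kpart_def)

lemma qmult_one_right: "q \<star> (1, 0, 0, 0) = q"
  by (cases q rule: prod_cases4) (simp add: qmult_def)

definition sh_form :: "quat \<times> quat \<Rightarrow> real" where
  "sh_form \<kappa> = kpart (fst \<kappa> \<star> qcnj (snd \<kappa>))"

lemma SH_iff_sh_form: "\<kappa> \<in> SH \<longleftrightarrow> \<kappa> \<noteq> 0 \<and> sh_form \<kappa> = 0"
  by (cases \<kappa>) (auto simp: SH_def sh_form_def qV_iff_kpart zero_prod_def)

lemma bilinear_kpart_qmult_qcnj: "bilinear (\<lambda>x y. kpart (x \<star> qcnj y))"
  unfolding bilinear_def
  by (auto intro!: linearI simp: kpart_def qmult_def qcnj_def split: prod.splits) (simp_all add: algebra_simps)

lemma has_derivative_sh_form: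
  "(sh_form has_derivative (\<lambda>v. kpart (fst v \<star> qcnj (snd \<kappa>) + fst \<kappa> \<star> qcnj (snd v)))) (at \<kappa>)"
proof -
  have "bounded_bilinear (\<lambda>x y. kpart (x \<star> qcnj y))"
    using bilinear_kpart_qmult_qcnj bilinear_conv_bounded_bilinear by blast
  then have "((\<lambda>\<kappa>. kpart (fst \<kappa> \<star> qcnj (snd \<kappa>))) has_derivative
      (\<lambda>v. kpart (fst \<kappa> \<star> qcnj (snd v)) + kpart (fst v \<star> qcnj (snd \<kappa>)))) (at \<kappa>)"
    by (rule bounded_bilinear.FDERIV[OF _ has_derivative_fst[OF has_derivative_ident]
          has_derivative_snd[OF has_derivative_ident]])
  then show ?thesis
    by (simp add: sh_form_def[abs_def] kpart_add add.commute)
qed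

definition rmul_pair :: "quat \<times> quat \<Rightarrow> quat \<Rightarrow> quat \<times> quat" where
  "rmul_pair \<kappa> x = (fst \<kappa> \<star> x, snd \<kappa> \<star> x)"

lemma rmul_set_eq_image: "rmul_set \<kappa> X = rmul_pair \<kappa> ` X"
  by (auto simp: rmul_set_def rmul_pair_def)

lemma bilinear_rmul_pair: "bilinear rmul_pair"
  unfolding bilinear_def
  by (auto intro!: linearI simp: rmul_pair_def qmult_def split: prod.splits) (simp_all add: algebra_simps)

lemma inner_rmul_pair: "rmul_pair \<kappa> x \<bullet> rmul_pair \<kappa> y = (\<kappa> \<bullet> \<kappa>) * (x \<bullet> y)"
  by (cases \<kappa> rule: quat_pair_cases;
      cases x rule: prod_cases4; cases y rule: prod_cases4; hypsubst_thin)
     (simp add: rmul_pair_def qmult_def inner_Pair; algebra)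

lemma sh_form_rmul_pair: "sh_form (rmul_pair \<kappa> x) = (x \<bullet> x) * sh_form \<kappa>"
  by (cases \<kappa> rule: quat_pair_cases; cases x rule: prod_cases4; hypsubst_thin)
     (simp add: sh_form_def rmul_pair_def kpart_def qmult_def qcnj_def inner_Pair; algebra)

lemma sh_form_add_kcheck:
  assumes "w \<in> qV"
  shows "sh_form (\<kappa> + rmul_pair (kcheck \<kappa>) w) = (1 + w \<bullet> w) * sh_form \<kappa>"
proof -
  obtain p q r where "w = (p, q, r, 0)"
    using assms by (auto simp: qV_def)
  then show ?thesis
    by (cases \<kappa> rule: quat_pair_cases; hypsubst_thin)
       (simp add: sh_form_def rmul_pair_def kcheck_def kpart_def qmult_def qcnj_def qprime_def; algebra)
qed

lemma inner_rmul_pair_kcheck: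
  assumes "sh_form \<kappa> = 0"
  shows "rmul_pair \<kappa> x \<bullet> rmul_pair (kcheck \<kappa>) y = 0"
  using assms
  by (cases \<kappa> rule: quat_pair_cases;
      cases x rule: prod_cases4; cases y rule: prod_cases4; hypsubst_thin)
     (simp add: sh_form_def rmul_pair_def kcheck_def kpart_def qmult_def qcnj_def qprime_def inner_Pair;
      algebra)

definition rmul_pair_adj :: "quat \<times> quat \<Rightarrow> quat \<times> quat \<Rightarrow> quat" where
  "rmul_pair_adj \<kappa> v = qcnj (fst \<kappa>) \<star> fst v + qcnj (snd \<kappa>) \<star> snd v"

lemma rmul_pair_adj_decomposition:
  assumes "sh_form \<kappa> = 0"
  shows "rmul_pair \<kappa> (rmul_pair_adj \<kappa> v) + rmul_pair (kcheck \<kappa>) (rmul_pair_adj (kcheck \<kappa>) v)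
    = (\<kappa> \<bullet> \<kappa>) *\<^sub>R v"
  using assms
  by (cases \<kappa> rule: quat_pair_cases; cases v rule: quat_pair_cases; hypsubst_thin)
     (simp add: sh_form_def rmul_pair_def rmul_pair_adj_def kcheck_def kpart_def qmult_def qcnj_def
        qprime_def inner_Pair; intro conjI; algebra)

lemma kpart_rmul_pair_adj_kcheck:
  "kpart (rmul_pair_adj (kcheck (\<xi>, \<eta>)) (\<alpha>, \<beta>)) = kpart (\<alpha> \<star> qcnj \<eta> + \<xi> \<star> qcnj \<beta>)"
  by (cases \<xi> rule: prod_cases4; cases \<eta> rule: prod_cases4;
      cases \<alpha> rule: prod_cases4; cases \<beta> rule: prod_cases4)
     (simp add: rmul_pair_adj_def kcheck_def kpart_def qmult_def qcnj_def qprime_def algebra_simps)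

lemma tangent_space_SH_subset_kernel:
  "tangent_space SH (\<xi>, \<eta>) \<subseteq> {(\<alpha>, \<beta>). \<alpha> \<star> qcnj \<eta> + \<xi> \<star> qcnj \<beta> \<in> qV}"
proof clarify
  fix \<alpha> \<beta> assume "(\<alpha>, \<beta>) \<in> tangent_space SH (\<xi>, \<eta>)"
  then have "kpart (\<alpha> \<star> qcnj \<eta> + \<xi> \<star> qcnj \<beta>) = 0"
    using derivative_vanishes_on_tangent_space[OF _ _ has_derivative_sh_form] by (fastforce simp: SH_iff_sh_form)
  then show "\<alpha> \<star> qcnj \<eta> + \<xi> \<star> qcnj \<beta> \<in> qV"
    by (simp add: qV_iff_kpart)
qed

lemma kernel_subset_rmul_sum:
  assumes "(\<xi>, \<eta>) \<in> SH"
  shows "{(\<alpha>, \<beta>). \<alpha> \<star> qcnj \<eta> + \<xi> \<star> qcnj \<beta> \<in> qV} \<subseteq>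
    {u + v | u v. u \<in> rmul_set (\<xi>, \<eta>) UNIV \<and> v \<in> rmul_set (kcheck (\<xi>, \<eta>)) qV}"
proof clarify
  fix \<alpha> \<beta> assume "\<alpha> \<star> qcnj \<eta> + \<xi> \<star> qcnj \<beta> \<in> qV"
  define \<kappa> where "\<kappa> = (\<xi>, \<eta>)"
  define N where "N = \<kappa> \<bullet> \<kappa>"
  have "\<kappa> \<noteq> 0" and "sh_form \<kappa> = 0"
    using assms by (simp_all add: \<kappa>_def SH_iff_sh_form)
  have "N > 0"
    unfolding N_def using \<open>\<kappa> \<noteq> 0\<close> by (rule inner_gt_zero_iff[THEN iffD2])
  have "rmul_pair_adj (kcheck \<kappa>) (\<alpha>, \<beta>) \<in> qV"
    using \<open>\<alpha> \<star> qcnj \<eta> + \<xi> \<star> qcnj \<beta> \<in> qV\<close>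
    by (simp add: \<kappa>_def qV_iff_kpart kpart_rmul_pair_adj_kcheck)
  moreover have "(\<alpha>, \<beta>) = rmul_pair \<kappa> ((1 / N) *\<^sub>R rmul_pair_adj \<kappa> (\<alpha>, \<beta>))
      + rmul_pair (kcheck \<kappa>) ((1 / N) *\<^sub>R rmul_pair_adj (kcheck \<kappa>) (\<alpha>, \<beta>))"
    using rmul_pair_adj_decomposition[OF \<open>sh_form \<kappa> = 0\<close>, of "(\<alpha>, \<beta>)"] \<open>N > 0\<close>
    by (simp add: bilinear_rmul[OF bilinear_rmul_pair] N_def flip: scaleR_right_distrib)
  ultimately show "\<exists>u v. (\<alpha>, \<beta>) = u + v \<and> u \<in> rmul_set (\<xi>, \<eta>) UNIV
      \<and> v \<in> rmul_set (kcheck (\<xi>, \<eta>)) qV"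
    unfolding rmul_set_eq_image \<kappa>_def by (blast intro: qV_scaleR)
qed

lemma rmul_sum_in_tangent_space_SH:
  assumes "\<kappa> \<in> SH" and "w \<in> qV"
  shows "rmul_pair \<kappa> h + rmul_pair (kcheck \<kappa>) w \<in> tangent_space SH \<kappa>"
proof (rule tangent_spaceI)
  define u where "u = rmul_pair (kcheck \<kappa>) w"
  define \<gamma> where "\<gamma> t = rmul_pair (\<kappa> + t *\<^sub>R u) ((1, 0, 0, 0) + t *\<^sub>R h)" for t :: real
  have "bounded_bilinear rmul_pair"
    using bilinear_rmul_pair bilinear_conv_bounded_bilinear by blast
  moreover have "((\<lambda>t. \<kappa> + t *\<^sub>R u) has_vector_derivative u) (at 0)"
    and "((\<lambda>t. (1, 0, 0, 0) + t *\<^sub>R h) has_vector_derivative h) (at 0)"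
    by (auto intro!: derivative_eq_intros)
  ultimately show \<gamma>': "(\<gamma> has_vector_derivative rmul_pair \<kappa> h + u) (at 0)"
    unfolding \<gamma>_def using bounded_bilinear.has_vector_derivative
    by (fastforce simp: rmul_pair_def qmult_one_right)
  show "\<gamma> 0 = \<kappa>"
    by (simp add: \<gamma>_def rmul_pair_def qmult_one_right)
  show "\<kappa> \<in> SH" by fact
  have "sh_form (\<gamma> t) = 0" for t
  proof -
    have "\<kappa> + t *\<^sub>R u = \<kappa> + rmul_pair (kcheck \<kappa>) (t *\<^sub>R w)"
      by (simp add: u_def bilinear_rmul[OF bilinear_rmul_pair])
    then show ?thesis
      using assms by (simp add: \<gamma>_def sh_form_rmul_pair sh_form_add_kcheck qV_scaleR SH_iff_sh_form)
  qed
  moreover have "eventually (\<lambda>t. \<gamma> t \<noteq> 0) (at 0)"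
    using has_vector_derivative_continuous[OF \<gamma>'] \<open>\<gamma> 0 = \<kappa>\<close> \<open>\<kappa> \<in> SH\<close>
    by (intro tendsto_imp_eventually_ne) (auto simp: continuous_at SH_iff_sh_form)
  ultimately show "eventually (\<lambda>t. \<gamma> t \<in> SH) (at 0)"
    by (auto simp: SH_iff_sh_form elim: eventually_mono)
qed

lemma rmul_set_UNIV_eq_sum:
  "rmul_set \<kappa> UNIV = {u + v | u v. u \<in> rmul_set \<kappa> qReals \<and> v \<in> rmul_set \<kappa> qImag}"
proof (intro equalityI subsetI)
  fix z assume "z \<in> rmul_set \<kappa> UNIV"
  then obtain a b c d where "z = rmul_pair \<kappa> (a, b, c, d)"
    unfolding rmul_set_eq_image by (metis imageE prod_cases4)
  also have "\<dots> = rmul_pair \<kappa> (a, 0, 0, 0) + rmul_pair \<kappa> (0, b, c, d)"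
    by (simp flip: bilinear_radd[OF bilinear_rmul_pair])
  finally show "z \<in> {u + v | u v. u \<in> rmul_set \<kappa> qReals \<and> v \<in> rmul_set \<kappa> qImag}"
    unfolding rmul_set_eq_image qReals_def qImag_def by blast
next
  fix z assume "z \<in> {u + v | u v. u \<in> rmul_set \<kappa> qReals \<and> v \<in> rmul_set \<kappa> qImag}"
  then obtain x y where "z = rmul_pair \<kappa> x + rmul_pair \<kappa> y"
    unfolding rmul_set_eq_image by blast
  then have "z = rmul_pair \<kappa> (x + y)"
    by (simp add: bilinear_radd[OF bilinear_rmul_pair])
  then show "z \<in> rmul_set \<kappa> UNIV"
    unfolding rmul_set_eq_image by blast
qed

lemma rmul_set_UNIV_split:
  "{u + v | u v. u \<in> rmul_set \<kappa> UNIV \<and> v \<in> B} =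
    {u + v + w | u v w. u \<in> rmul_set \<kappa> qReals \<and> v \<in> rmul_set \<kappa> qImag \<and> w \<in> B}"
  unfolding rmul_set_UNIV_eq_sum by blast

lemma rmul_set_kcheck_orthogonal:
  assumes "sh_form \<kappa> = 0" and "u \<in> rmul_set \<kappa> X" and "v \<in> rmul_set (kcheck \<kappa>) Y"
  shows "u \<bullet> v = 0"
  using assms inner_rmul_pair_kcheck unfolding rmul_set_eq_image by blast

lemma rmul_set_qReals_qImag_orthogonal:
  assumes "u \<in> rmul_set \<kappa> qReals" and "v \<in> rmul_set \<kappa> qImag"
  shows "u \<bullet> v = 0"
proof -
  obtain a b c d where "u = rmul_pair \<kappa> (a, 0, 0, 0)" and "v = rmul_pair \<kappa> (0, b, c, d)"
    using assms unfolding rmul_set_eq_image qReals_def qImag_def by blast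
  then show ?thesis
    by (simp only: inner_rmul_pair) simp
qed

theorem lemma3p11:
  fixes \<xi> \<eta> :: quat
  assumes "(\<xi>, \<eta>) \<in> SH"
  defines "\<kappa> \<equiv> (\<xi>, \<eta>)"
  shows "(tangent_space SH \<kappa> = {(\<alpha>, \<beta>). \<alpha> \<star> qcnj \<eta> + \<xi> \<star> qcnj \<beta> \<in> qV}) \<and>
    (tangent_space SH \<kappa> = {u + v | u v. u \<in> rmul_set \<kappa> UNIV \<and> v \<in> rmul_set (kcheck \<kappa>) qV}) \<and>
    (\<forall>u \<in> rmul_set \<kappa> UNIV. \<forall>v \<in> rmul_set (kcheck \<kappa>) qV. inner u v = 0) \<and>
    (tangent_space SH \<kappa> = {u + v + w | u v w. u \<in> rmul_set \<kappa> qReals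
            \<and> v \<in> rmul_set \<kappa> qImag \<and> w \<in> rmul_set (kcheck \<kappa>) qV}) \<and>
    (\<forall>u \<in> rmul_set \<kappa> qReals. \<forall>v \<in> rmul_set \<kappa> qImag. inner u v = 0) \<and>
    (\<forall>u \<in> rmul_set \<kappa> qReals. \<forall>w \<in> rmul_set (kcheck \<kappa>) qV. inner u w = 0) \<and>
    (\<forall>v \<in> rmul_set \<kappa> qImag. \<forall>w \<in> rmul_set (kcheck \<kappa>) qV. inner v w = 0)"
proof -
  have "sh_form \<kappa> = 0"
    using assms by (simp add: SH_iff_sh_form)
  let ?K = "{(\<alpha>, \<beta>). \<alpha> \<star> qcnj \<eta> + \<xi> \<star> qcnj \<beta> \<in> qV}"
  let ?D = "{u + v | u v. u \<in> rmul_set \<kappa> UNIV \<and> v \<in> rmul_set (kcheck \<kappa>) qV}"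
  have "tangent_space SH \<kappa> \<subseteq> ?K"
    unfolding \<kappa>_def by (rule tangent_space_SH_subset_kernel)
  moreover have "?K \<subseteq> ?D"
    unfolding \<kappa>_def by (rule kernel_subset_rmul_sum[OF assms(1)])
  moreover have "?D \<subseteq> tangent_space SH \<kappa>"
    using rmul_sum_in_tangent_space_SH[OF assms(1)[folded \<kappa>_def]]
    unfolding rmul_set_eq_image by blast
  ultimately have T_K: "tangent_space SH \<kappa> = ?K" and T_D: "tangent_space SH \<kappa> = ?D"
    by (meson subset_antisym order_trans)+
  have T_D4: "tangent_space SH \<kappa> = {u + v + w | u v w. u \<in> rmul_set \<kappa> qReals
      \<and> v \<in> rmul_set \<kappa> qImag \<and> w \<in> rmul_set (kcheck \<kappa>) qV}"
    unfolding T_D by (rule rmul_set_UNIV_split)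
  have "\<forall>u \<in> rmul_set \<kappa> X. \<forall>v \<in> rmul_set (kcheck \<kappa>) qV. u \<bullet> v = 0" for X
    using rmul_set_kcheck_orthogonal[OF \<open>sh_form \<kappa> = 0\<close>] by blast
  moreover have "\<forall>u \<in> rmul_set \<kappa> qReals. \<forall>v \<in> rmul_set \<kappa> qImag. u \<bullet> v = 0"
    using rmul_set_qReals_qImag_orthogonal by blast
  ultimately show ?thesis
    using T_K T_D T_D4 by blast
qed

end
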